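(* Let $G$ be a graph without isolated vertices. (i) If $f=(V_0,V_1,V_2)$ is any $\gamma_R(G)$-function, then $\gamma_{qtR}(G)\le \gamma_R(G)+|V_2|$. (ii) If $f'=(V'_0,V'_1,V'_2)$ is any $\gamma_{qtR}(G)$-function, then $\gamma_{tR}(G)\le \gamma_{qtR}(G)+|V'_1|$.
   Context: All graphs are finite, simple and undirected. For a function $f:V(G)\to\{0,1,2\}$ write $V_i=\{v: f(v)=i\}$ and identify $f$ with $(V_0,V_1,V_2)$; its weight is $\omega(f)=\sum_{v}f(v)=|V_1|+2|V_2|$. A Roman dominating function (RDF) is such an $f$ in which every vertex with label $0$ has a neighbor with label $2$; $\gamma_R(G)$ is the minimum weight of an RDF. A total Roman dominating function (TRDF) on a graph without isolated vertices is an RDF such that the subgraph induced by $V_1\cup V_2$ has no isolated vertices; $\gamma_{tR}(G)$ is the minimum weight of a TRDF. A quasi-total Roman dominating function (QTRDF) is an $f:V(G)\to\{0,1,2\}$ such that every vertex with label $0$ is adjacent to a vertex with label $2$, and every vertex that is isolated in the subgraph induced by $V_1\cup V_2$ has label $1$; $\gamma_{qtR}(G)$ is the minimum weight of a QTRDF. A $\gamma_R(G)$-function (resp. $\gamma_{qtR}(G)$-function) is an RDF (resp. QTRDF) of minimum weight. *)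

theory Defs
  imports Main
begin

definition simple_graph :: "'a set \<Rightarrow> ('a \<Rightarrow> 'a \<Rightarrow> bool) \<Rightarrow> bool" where
  "simple_graph V E \<longleftrightarrow> finite V \<and> (\<forall>u v. E u v \<longrightarrow> u \<in> V \<and> v \<in> V) \<and>
     (\<forall>u v. E u v \<longrightarrow> E v u) \<and> (\<forall>v. \<not> E v v)"

definition no_isolated :: "'a set \<Rightarrow> ('a \<Rightarrow> 'a \<Rightarrow> bool) \<Rightarrow> bool" where
  "no_isolated V E \<longleftrightarrow> (\<forall>v\<in>V. \<exists>u\<in>V. E v u)"

definition labeling :: "'a set \<Rightarrow> ('a \<Rightarrow> nat) \<Rightarrow> bool" where
  "labeling V f \<longleftrightarrow> (\<forall>v\<in>V. f v \<le> 2)"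

definition lclass :: "'a set \<Rightarrow> ('a \<Rightarrow> nat) \<Rightarrow> nat \<Rightarrow> 'a set" where
  "lclass V f i = {v\<in>V. f v = i}"

definition weight :: "'a set \<Rightarrow> ('a \<Rightarrow> nat) \<Rightarrow> nat" where
  "weight V f = (\<Sum>v\<in>V. f v)"

definition is_RDF :: "'a set \<Rightarrow> ('a \<Rightarrow> 'a \<Rightarrow> bool) \<Rightarrow> ('a \<Rightarrow> nat) \<Rightarrow> bool" where
  "is_RDF V E f \<longleftrightarrow> labeling V f \<and>
     (\<forall>v\<in>V. f v = 0 \<longrightarrow> (\<exists>u\<in>V. E v u \<and> f u = 2))"

text \<open>v is isolated in the subgraph induced by V_1 \<union> V_2 (assuming f v \<noteq> 0).\<close>
definition isolated_in_pos :: "'a set \<Rightarrow> ('a \<Rightarrow> 'a \<Rightarrow> bool) \<Rightarrow> ('a \<Rightarrow> nat) \<Rightarrow> 'a \<Rightarrow> bool" where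
  "isolated_in_pos V E f v \<longleftrightarrow> \<not> (\<exists>u\<in>V. E v u \<and> f u \<noteq> 0)"

definition is_TRDF :: "'a set \<Rightarrow> ('a \<Rightarrow> 'a \<Rightarrow> bool) \<Rightarrow> ('a \<Rightarrow> nat) \<Rightarrow> bool" where
  "is_TRDF V E f \<longleftrightarrow> is_RDF V E f \<and>
     (\<forall>v\<in>V. f v \<noteq> 0 \<longrightarrow> \<not> isolated_in_pos V E f v)"

definition is_QTRDF :: "'a set \<Rightarrow> ('a \<Rightarrow> 'a \<Rightarrow> bool) \<Rightarrow> ('a \<Rightarrow> nat) \<Rightarrow> bool" where
  "is_QTRDF V E f \<longleftrightarrow> is_RDF V E f \<and>
     (\<forall>v\<in>V. f v \<noteq> 0 \<longrightarrow> isolated_in_pos V E f v \<longrightarrow> f v = 1)"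

definition gamma_R :: "'a set \<Rightarrow> ('a \<Rightarrow> 'a \<Rightarrow> bool) \<Rightarrow> nat" where
  "gamma_R V E = (LEAST w. \<exists>f. is_RDF V E f \<and> weight V f = w)"

definition gamma_tR :: "'a set \<Rightarrow> ('a \<Rightarrow> 'a \<Rightarrow> bool) \<Rightarrow> nat" where
  "gamma_tR V E = (LEAST w. \<exists>f. is_TRDF V E f \<and> weight V f = w)"

definition gamma_qtR :: "'a set \<Rightarrow> ('a \<Rightarrow> 'a \<Rightarrow> bool) \<Rightarrow> nat" where
  "gamma_qtR V E = (LEAST w. \<exists>f. is_QTRDF V E f \<and> weight V f = w)"

definition is_gamma_R_function :: "'a set \<Rightarrow> ('a \<Rightarrow> 'a \<Rightarrow> bool) \<Rightarrow> ('a \<Rightarrow> nat) \<Rightarrow> bool" where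
  "is_gamma_R_function V E f \<longleftrightarrow> is_RDF V E f \<and> weight V f = gamma_R V E"

definition is_gamma_qtR_function :: "'a set \<Rightarrow> ('a \<Rightarrow> 'a \<Rightarrow> bool) \<Rightarrow> ('a \<Rightarrow> nat) \<Rightarrow> bool" where
  "is_gamma_qtR_function V E f \<longleftrightarrow> is_QTRDF V E f \<and> weight V f = gamma_qtR V E"

end

theory Submission
  imports Defs
begin

text \<open>Both bounds come from one repair step. Let \<open>f\<close> be an RDF and \<open>I\<close> a set of positively
  labelled vertices that are isolated in the subgraph induced by \<open>V\<^sub>1 \<union> V\<^sub>2\<close>. Every vertex
  of \<open>I\<close> has a neighbour, necessarily labelled \<open>0\<close>; relabelling one such neighbour per vertex
  of \<open>I\<close> with \<open>1\<close> costs at most \<open>|I|\<close> and leaves isolated only the positive vertices outside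
  \<open>I\<close> that were isolated before. For (i) take \<open>I\<close> the isolated vertices of \<open>V\<^sub>2\<close>, so that the
  remaining isolated vertices carry label \<open>1\<close>; for (ii) the isolated vertices of a QTRDF all lie
  in \<open>V'\<^sub>1\<close>, and taking all of them as \<open>I\<close> leaves none.\<close>

definition pos_isolated :: "'a set \<Rightarrow> ('a \<Rightarrow> 'a \<Rightarrow> bool) \<Rightarrow> ('a \<Rightarrow> nat) \<Rightarrow> 'a set" where
  "pos_isolated V E f = {v \<in> V. f v \<noteq> 0 \<and> isolated_in_pos V E f v}"

lemma weight_relabel_zeros_le:
  assumes "finite V" and "S \<subseteq> V" and "\<forall>v\<in>S. f v = 0"
  shows "weight V (\<lambda>v. if v \<in> S then 1 else f v) \<le> weight V f + card S"
proof -
  have "weight V (\<lambda>v. if v \<in> S then 1 else f v) \<le> (\<Sum>v\<in>V. f v + (if v \<in> S then 1 else 0))"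
    unfolding weight_def using assms(3) by (intro sum_mono) auto
  also have "\<dots> = weight V f + (\<Sum>v\<in>V. if v \<in> S then 1 else 0)"
    unfolding weight_def by (simp add: sum.distrib)
  also have "(\<Sum>v\<in>V. if v \<in> S then 1 else 0::nat) = card S"
    using assms(1,2) by (simp add: sum.If_cases Int_absorb1)
  finally show ?thesis .
qed

lemma is_RDF_relabel_zeros:
  assumes "is_RDF V E f" and "\<forall>v\<in>S. f v = 0"
  shows "is_RDF V E (\<lambda>v. if v \<in> S then 1 else f v)"
  using assms unfolding is_RDF_def labeling_def by (metis (full_types) one_le_numeral zero_neq_numeral)

lemma isolated_repair:
  assumes "simple_graph V E" and "no_isolated V E" and "is_RDF V E f"
    and "I \<subseteq> pos_isolated V E f"
  obtains g where "is_RDF V E g" and "weight V g \<le> weight V f + card I"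
    and "\<And>v. f v \<noteq> 0 \<Longrightarrow> g v = f v"
    and "\<And>v. v \<in> V \<Longrightarrow> g v \<noteq> 0 \<Longrightarrow> isolated_in_pos V E g v \<Longrightarrow> v \<in> pos_isolated V E f - I"
proof -
  have fin: "finite V" and sym: "\<And>u v. E u v \<Longrightarrow> E v u"
    using assms(1) unfolding simple_graph_def by auto
  obtain nb where nb: "\<And>v. v \<in> V \<Longrightarrow> nb v \<in> V \<and> E v (nb v)"
    using assms(2) unfolding no_isolated_def by metis
  define S where "S = nb ` I"
  have I: "\<And>w. w \<in> I \<Longrightarrow> w \<in> V \<and> f w \<noteq> 0 \<and> isolated_in_pos V E f w"
    using assms(4) unfolding pos_isolated_def by auto
  have SV: "S \<subseteq> V" using nb I unfolding S_def by auto
  have S0: "\<forall>v\<in>S. f v = 0" using nb I unfolding S_def isolated_in_pos_def by fastforce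
  define g where "g = (\<lambda>v. if v \<in> S then 1 else f v)"
  have g_pos: "g v \<noteq> 0" if "f v \<noteq> 0 \<or> v \<in> S" for v using that unfolding g_def by auto
  show thesis
  proof
    show "is_RDF V E g" unfolding g_def using assms(3) S0 by (rule is_RDF_relabel_zeros)
    have "finite I" using I by (blast intro: finite_subset[OF _ fin])
    then have "card S \<le> card I" unfolding S_def by (rule card_image_le)
    then show "weight V g \<le> weight V f + card I"
      using weight_relabel_zeros_le[OF fin SV S0] unfolding g_def by linarith
    show "g v = f v" if "f v \<noteq> 0" for v using that S0 unfolding g_def by auto
  next
    fix v assume v: "v \<in> V" "g v \<noteq> 0" and iso: "isolated_in_pos V E g v"
    have "v \<notin> S"
    proof
      assume "v \<in> S"
      then obtain w where "w \<in> I" "v = nb w" unfolding S_def by auto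
      \<comment> \<open>the vertex \<open>w\<close> that \<open>v\<close> was chosen for keeps its positive label\<close>
      then show False using iso I[of w] nb[of w] sym g_pos[of w] unfolding isolated_in_pos_def by blast
    qed
    then have "f v \<noteq> 0" using v(2) unfolding g_def by simp
    moreover have "isolated_in_pos V E f v"
      using iso g_pos unfolding isolated_in_pos_def by blast
    moreover have "v \<notin> I"
      using iso nb[OF v(1)] g_pos[of "nb v"] unfolding S_def isolated_in_pos_def by blast
    ultimately show "v \<in> pos_isolated V E f - I" using v(1) unfolding pos_isolated_def by blast
  qed
qed

lemma gamma_qtR_le_weight: "is_QTRDF V E g \<Longrightarrow> gamma_qtR V E \<le> weight V g"
  unfolding gamma_qtR_def by (rule Least_le) blast

lemma gamma_tR_le_weight: "is_TRDF V E g \<Longrightarrow> gamma_tR V E \<le> weight V g"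
  unfolding gamma_tR_def by (rule Least_le) blast

lemma gamma_qtR_le_gamma_R_function:
  assumes "simple_graph V E" and "no_isolated V E" and "is_gamma_R_function V E f"
  shows "gamma_qtR V E \<le> gamma_R V E + card (lclass V f 2)"
proof -
  have f: "is_RDF V E f" "weight V f = gamma_R V E"
    using assms(3) unfolding is_gamma_R_function_def by auto
  define I where "I = {v \<in> pos_isolated V E f. f v = 2}"
  have I_sub: "I \<subseteq> pos_isolated V E f" unfolding I_def by blast
  obtain g where g: "is_RDF V E g" "weight V g \<le> weight V f + card I"
    and g_eq: "\<And>v. f v \<noteq> 0 \<Longrightarrow> g v = f v"
    and g_iso: "\<And>v. v \<in> V \<Longrightarrow> g v \<noteq> 0 \<Longrightarrow> isolated_in_pos V E g v \<Longrightarrow> v \<in> pos_isolated V E f - I"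
    by (rule isolated_repair[OF assms(1,2) f(1) I_sub]) (rule that)
  have "is_QTRDF V E g"
    unfolding is_QTRDF_def
  proof (intro conjI g(1) ballI impI)
    fix v assume "v \<in> V" "g v \<noteq> 0" "isolated_in_pos V E g v"
    then have "v \<in> pos_isolated V E f - I" by (rule g_iso)
    moreover have "f v \<le> 2" using f(1) \<open>v \<in> V\<close> unfolding is_RDF_def labeling_def by blast
    ultimately show "g v = 1" using g_eq unfolding I_def pos_isolated_def by fastforce
  qed
  moreover have "card I \<le> card (lclass V f 2)"
    using assms(1) unfolding simple_graph_def I_def pos_isolated_def lclass_def
    by (intro card_mono) auto
  ultimately show ?thesis using gamma_qtR_le_weight g(2) f(2) by fastforce
qed

lemma gamma_tR_le_gamma_qtR_function:
  assumes "simple_graph V E" and "no_isolated V E" and "is_gamma_qtR_function V E f"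
  shows "gamma_tR V E \<le> gamma_qtR V E + card (lclass V f 1)"
proof -
  have f: "is_QTRDF V E f" "weight V f = gamma_qtR V E"
    using assms(3) unfolding is_gamma_qtR_function_def by auto
  then have rdf: "is_RDF V E f" unfolding is_QTRDF_def by blast
  obtain g where g: "is_RDF V E g" "weight V g \<le> weight V f + card (pos_isolated V E f)"
    and "\<And>v. f v \<noteq> 0 \<Longrightarrow> g v = f v"
    and g_iso: "\<And>v. v \<in> V \<Longrightarrow> g v \<noteq> 0 \<Longrightarrow> isolated_in_pos V E g v \<Longrightarrow> v \<in> pos_isolated V E f - pos_isolated V E f"
    by (rule isolated_repair[OF assms(1,2) rdf subset_refl]) (rule that)
  have "is_TRDF V E g"
    unfolding is_TRDF_def
  proof (intro conjI g(1) ballI impI notI)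
    fix v assume "v \<in> V" "g v \<noteq> 0" "isolated_in_pos V E g v"
    from g_iso[OF this] show False by simp
  qed
  moreover have "card (pos_isolated V E f) \<le> card (lclass V f 1)"
    using assms(1) f(1) unfolding simple_graph_def is_QTRDF_def pos_isolated_def lclass_def
    by (intro card_mono) auto
  ultimately show ?thesis using gamma_tR_le_weight g(2) f(2) by fastforce
qed

theorem mainTheorem1:
  fixes V :: "'a set" and E :: "'a \<Rightarrow> 'a \<Rightarrow> bool"
  assumes "simple_graph V E" and "no_isolated V E"
  shows "(\<forall>f. is_gamma_R_function V E f \<longrightarrow>
            gamma_qtR V E \<le> gamma_R V E + card (lclass V f 2))
       \<and> (\<forall>f'. is_gamma_qtR_function V E f' \<longrightarrow>
            gamma_tR V E \<le> gamma_qtR V E + card (lclass V f' 1))"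
  using gamma_qtR_le_gamma_R_function[OF assms] gamma_tR_le_gamma_qtR_function[OF assms]
  by blast

end
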